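(* Consider the Lur'e system and its Krasovskii regularization $\dot x\in F(x)$ as in the context, and suppose Assumptions 1 and 2 hold (with $\Gamma$, $P$, $\eta$ from Assumption 2). Let $V(x):=\tfrac12 x^\top Px+\sum_{i=1}^p\gamma_i\int_0^{C_ix}\psi_i(\sigma)\,d\sigma$. Then there exist $\alpha_1,\alpha_2,\alpha_3\in\mathcal{K}_\infty$ such that $\alpha_1(|x|)\le V(x)\le\alpha_2(|x|)$ for all $x\in\mathbb{R}^n$ and $\sup\dot{\overline V}_F(x)\le-\alpha_3(V(x))$ for all $x\in\mathbb{R}^n$ (with $\sup\emptyset=-\infty$).
   Context: System: $\dot x=Ax+Bu$, $y=Cx$, $u=-\boldsymbol\psi(y)$, $x\in\mathbb{R}^n$, $u,y\in\mathbb{R}^p$, $A,B,C$ real matrices of compatible sizes, $\boldsymbol\psi(y)=(\psi_1(y_1),\dots,\psi_p(y_p))$. A function $\mathbb{R}\to\mathbb{R}$ is piecewise continuous if on every bounded interval it has finitely many discontinuity points, is continuous between them, and has finite one-sided limits there. Krasovskii regularization: $\boldsymbol\Psi_i(s):=\bigcap_{\delta>0}\overline{\mathrm{co}}\,\psi_i(s+\delta[-1,1])$, $\boldsymbol\Psi(y):=\boldsymbol\Psi_1(y_1)\times\dots\times\boldsymbol\Psi_p(y_p)$, and $F(x):=\{Ax-Bw:w\in\boldsymbol\Psi(Cx)\}$. Assumption 1: for each $i$, $\psi_i$ is piecewise continuous and there is $\zeta_i\in(0,+\infty]$ with $\psi_i(s)(\psi_i(s)-\zeta_is)\le0$ for all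 $s\in\mathbb{R}$; when $\zeta_i=+\infty$ this condition means $\psi_i(s)s\ge0$ for all $s$. Set $Z:=\mathrm{diag}(\zeta_1^{-1},\dots,\zeta_p^{-1})$ with the convention $(+\infty)^{-1}=0$. Assumption 2: there exist a diagonal $\Gamma=\mathrm{diag}(\gamma_1,\dots,\gamma_p)>0$, a symmetric $P>0$ and $\eta>0$ such that $$M:=\begin{bmatrix}PA+A^\top P+\eta I_n & PB-(C+\Gamma CA)^\top\\ B^\top P-(C+\Gamma CA) & -2Z-\Gamma CB-(\Gamma CB)^\top\end{bmatrix}\le0.$$ Generalized gradient of $V$: $\partial V(x)=\{Px+C^\top\Gamma w:w\in\boldsymbol\Psi(Cx)\}$. Set-valued Lie derivative: $\dot{\overline V}_F(x):=\{a\in\mathbb{R}:\exists f\in F(x),\ \langle v,f\rangle=a\ \forall v\in\partial V(x)\}$. $\mathcal{K}_\infty$ denotes continuous strictly increasing unbounded functions $\mathbb{R}_{\ge0}\to\mathbb{R}_{\ge0}$ vanishing at $0$. *)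

theory Defs
  imports "HOL-Analysis.Analysis"
begin

definition piecewise_cont :: "(real \<Rightarrow> real) \<Rightarrow> bool" where
  "piecewise_cont f \<longleftrightarrow>
     (\<forall>a b. finite {s \<in> {a..b}. \<not> isCont f s}) \<and>
     (\<forall>s. (\<exists>l. (f \<longlongrightarrow> l) (at_left s)) \<and> (\<exists>r. (f \<longlongrightarrow> r) (at_right s)))"

definition sector_cond :: "(real \<Rightarrow> real) \<Rightarrow> ereal \<Rightarrow> bool" where
  "sector_cond f z \<longleftrightarrow> 0 < z \<and>
     (\<forall>s. if z = \<infinity> then f s * s \<ge> 0 else f s * (f s - real_of_ereal z * s) \<le> 0)"

definition ereal_recip :: "ereal \<Rightarrow> real" where
  "ereal_recip z = (if z = \<infinity> then 0 else 1 / real_of_ereal z)"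

definition kras :: "(real \<Rightarrow> real) \<Rightarrow> real \<Rightarrow> real set" where
  "kras f s = \<Inter> {closure (convex hull (f ` {s - \<delta>..s + \<delta>})) | \<delta>. \<delta> > 0}"

definition Kras :: "('p \<Rightarrow> real \<Rightarrow> real) \<Rightarrow> real^'p \<Rightarrow> (real^'p) set" where
  "Kras psi y = {w. \<forall>i. w $ i \<in> kras (psi i) (y $ i)}"

definition diagm :: "('p \<Rightarrow> real) \<Rightarrow> real^'p^'p" where
  "diagm d = (\<chi> i j. if i = j then d i else 0)"

definition block_mat ::
  "real^'n^'n \<Rightarrow> real^'p^'n \<Rightarrow> real^'n^'p \<Rightarrow> real^'p^'p \<Rightarrow> real^('n + 'p)^('n + 'p)" where
  "block_mat M11 M12 M21 M22 = (\<chi> i j. case i of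
      Inl a \<Rightarrow> (case j of Inl b \<Rightarrow> M11 $ a $ b | Inr b \<Rightarrow> M12 $ a $ b)
    | Inr a \<Rightarrow> (case j of Inl b \<Rightarrow> M21 $ a $ b | Inr b \<Rightarrow> M22 $ a $ b))"

definition neg_semidef :: "real^'m^'m \<Rightarrow> bool" where
  "neg_semidef M \<longleftrightarrow> transpose M = M \<and> (\<forall>v. v \<bullet> (M *v v) \<le> 0)"

definition pos_def :: "real^'n^'n \<Rightarrow> bool" where
  "pos_def P \<longleftrightarrow> transpose P = P \<and> (\<forall>x. x \<noteq> 0 \<longrightarrow> x \<bullet> (P *v x) > 0)"

definition lmi_M :: "real^'n^'n \<Rightarrow> real^'p^'n \<Rightarrow> real^'n^'p \<Rightarrow> ereal^'p \<Rightarrow>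
    ('p \<Rightarrow> real) \<Rightarrow> real^'n^'n \<Rightarrow> real \<Rightarrow> real^('n + 'p)^('n + 'p)" where
  "lmi_M A B C zeta gamma P eta =
     (let G = diagm gamma; Z = diagm (\<lambda>i. ereal_recip (zeta $ i)); K = C + G ** C ** A in
      block_mat (P ** A + transpose A ** P + eta *\<^sub>R mat 1)
                (P ** B - transpose K)
                (transpose B ** P - K)
                (- (2 *\<^sub>R Z) - G ** C ** B - transpose (G ** C ** B)))"

definition int0 :: "(real \<Rightarrow> real) \<Rightarrow> real \<Rightarrow> real" where
  "int0 f t = (if 0 \<le> t then integral {0..t} f else - integral {t..0} f)"

definition lure_V :: "real^'n^'n \<Rightarrow> real^'n^'p \<Rightarrow> ('p \<Rightarrow> real) \<Rightarrow> ('p \<Rightarrow> real \<Rightarrow> real)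
    \<Rightarrow> real^'n \<Rightarrow> real" where
  "lure_V P C gamma psi x =
     (1/2) * (x \<bullet> (P *v x)) + (\<Sum>i\<in>UNIV. gamma i * int0 (psi i) ((C *v x) $ i))"

definition F_kras :: "real^'n^'n \<Rightarrow> real^'p^'n \<Rightarrow> real^'n^'p \<Rightarrow> ('p \<Rightarrow> real \<Rightarrow> real)
    \<Rightarrow> real^'n \<Rightarrow> (real^'n) set" where
  "F_kras A B C psi x = {A *v x - B *v w | w. w \<in> Kras psi (C *v x)}"

definition gen_grad :: "real^'n^'n \<Rightarrow> real^'n^'p \<Rightarrow> ('p \<Rightarrow> real) \<Rightarrow> ('p \<Rightarrow> real \<Rightarrow> real)
    \<Rightarrow> real^'n \<Rightarrow> (real^'n) set" where
  "gen_grad P C gamma psi x =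
     {P *v x + transpose C *v (diagm gamma *v w) | w. w \<in> Kras psi (C *v x)}"

definition lie_set :: "(real^'n) set \<Rightarrow> (real^'n) set \<Rightarrow> real set" where
  "lie_set dV Fx = {a. \<exists>f\<in>Fx. \<forall>v\<in>dV. v \<bullet> f = a}"

definition class_Kinf :: "(real \<Rightarrow> real) \<Rightarrow> bool" where
  "class_Kinf \<alpha> \<longleftrightarrow> continuous_on {0..} \<alpha> \<and> strict_mono_on {0..} \<alpha> \<and> \<alpha> 0 = 0 \<and>
     (\<forall>s\<ge>0. \<alpha> s \<ge> 0) \<and> filterlim \<alpha> at_top at_top"

end

theory Submission
  imports Defs
begin

text \<open>Along the Krasovskii regularization the Lie derivative of \<open>V\<close> at \<open>x\<close> is
  \<open>\<langle>Px + C\<^sup>T\<Gamma>w, Ax - Bw\<rangle>\<close> for some \<open>w \<in> \<Psi>(Cx)\<close>. Testing the LMI with the vector \<open>(x, -w)\<close>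
  bounds twice this number by \<open>-\<eta>|x|\<^sup>2 - 2\<langle>Cx, w\<rangle> + 2\<langle>w, Zw\<rangle>\<close>, and the sector condition
  survives the regularization in the form \<open>\<zeta>\<^sub>i\<^sup>-\<^sup>1 w\<^sub>i\<^sup>2 \<le> w\<^sub>i (Cx)\<^sub>i\<close>, so the Lie derivative is at most
  \<open>-\<eta>|x|\<^sup>2/2\<close>. The sector condition also makes the integral terms of \<open>V\<close> nonnegative, whence
  \<open>V(x) \<ge> x\<^sup>TPx/2\<close>; piecewise continuity makes them continuous and locally bounded in \<open>x\<close>, which
  yields a class-\<open>\<K>\<^sub>\<infinity>\<close> upper bound \<open>\<alpha>\<^sub>2\<close>. Finally \<open>\<alpha>\<^sub>3 := (\<eta>/2)(\<alpha>\<^sub>2\<^sup>-\<^sup>1)\<^sup>2\<close>.\<close>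

lemma sum_UNIV_Plus:
  fixes f :: "('a::finite + 'b::finite) \<Rightarrow> 'c::comm_monoid_add"
  shows "(\<Sum>k\<in>UNIV. f k) = (\<Sum>a\<in>UNIV. f (Inl a)) + (\<Sum>b\<in>UNIV. f (Inr b))"
proof -
  have "(\<Sum>k\<in>UNIV. f k) = (\<Sum>k\<in>UNIV <+> UNIV. f k)" by simp
  also have "\<dots> = (\<Sum>a\<in>UNIV. f (Inl a)) + (\<Sum>b\<in>UNIV. f (Inr b))"
    by (subst sum.Plus) (auto simp: o_def)
  finally show ?thesis .
qed

lemma block_mat_quadratic_form:
  fixes x :: "real^'n" and z :: "real^'p"
  shows "(\<chi> k. case k of Inl a \<Rightarrow> x$a | Inr b \<Rightarrow> z$b) \<bullet>
     (block_mat M11 M12 M21 M22 *v (\<chi> k. case k of Inl a \<Rightarrow> x$a | Inr b \<Rightarrow> z$b))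
   = x \<bullet> (M11 *v x) + x \<bullet> (M12 *v z) + z \<bullet> (M21 *v x) + z \<bullet> (M22 *v z)"
  unfolding inner_vec_def matrix_vector_mult_def block_mat_def
  by (simp add: sum_UNIV_Plus sum_distrib_left distrib_left sum.distrib)

lemma inner_matrix_vector_mult: "(u::real^'m) \<bullet> (M *v v) = (transpose M *v u) \<bullet> v"
  by (metis dot_lmul_matrix inner_commute transpose_matrix_vector)

lemma diagm_mv_nth: "(diagm d *v w) $ i = d i * w $ i"
  unfolding diagm_def matrix_vector_mult_def
  by (simp add: if_distrib if_distribR cong: if_cong)

lemma transpose_diagm: "transpose (diagm d) = diagm d"
  unfolding diagm_def transpose_def by vector

lemma transpose_add: "transpose (A + B) = transpose A + (transpose B :: real^'a^'b)"
  by (simp add: transpose_def vec_eq_iff)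

lemma uminus_matrix_vector_mult: "(- M) *v x = - (M *v (x::real^'a))"
  by (simp add: matrix_vector_mult_def vec_eq_iff sum_negf)

lemma matrix_vector_mult_uminus: "M *v (- x) = - (M *v (x::real^'a))"
  by (simp add: matrix_vector_mult_def vec_eq_iff sum_negf)

lemma lmi_inner_bound:
  fixes A :: "real^'n^'n" and B :: "real^'p^'n" and C :: "real^'n^'p"
    and zeta :: "ereal^'p" and P :: "real^'n^'n" and x :: "real^'n" and w :: "real^'p"
  assumes LMI: "neg_semidef (lmi_M A B C zeta gamma P eta)"
    and P_sym: "transpose P = P"
  shows "2 * ((P *v x + transpose C *v (diagm gamma *v w)) \<bullet> (A *v x - B *v w))
     \<le> - eta * (x \<bullet> x) - 2 * ((C *v x) \<bullet> w) + 2 * (w \<bullet> (diagm (\<lambda>i. ereal_recip (zeta $ i)) *v w))"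
proof -
  define G where "G = diagm gamma"
  define Z where "Z = diagm (\<lambda>i. ereal_recip (zeta $ i))"
  define v where "v = (\<chi> k. case k of Inl a \<Rightarrow> x$a | Inr b \<Rightarrow> (-w)$b)"
  have "v \<bullet> (lmi_M A B C zeta gamma P eta *v v) \<le> 0"
    using LMI unfolding neg_semidef_def by blast
  also have "v \<bullet> (lmi_M A B C zeta gamma P eta *v v) =
     x \<bullet> ((P ** A + transpose A ** P + eta *\<^sub>R mat 1) *v x)
     + x \<bullet> ((P ** B - transpose (C + G ** C ** A)) *v (-w))
     + (-w) \<bullet> ((transpose B ** P - (C + G ** C ** A)) *v x)
     + (-w) \<bullet> ((- (2 *\<^sub>R Z) - G ** C ** B - transpose (G ** C ** B)) *v (-w))"
    unfolding lmi_M_def Let_def v_def G_def Z_def by (rule block_mat_quadratic_form)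
  finally have Q: "\<dots> \<le> 0" .
  have G_sym: "transpose G = G" unfolding G_def by (rule transpose_diagm)
  have e1: "x \<bullet> (P *v y) = (P *v x) \<bullet> y" for y
    using inner_matrix_vector_mult[of x P] P_sym by simp
  have e2: "x \<bullet> (transpose M *v y) = (M *v x) \<bullet> y" for M :: "real^'n^'m" and y
    using inner_matrix_vector_mult[of x "transpose M"] by simp
  have e3: "x \<bullet> (transpose (G ** C ** A) *v w) = w \<bullet> (G *v (C *v (A *v x)))"
    using e2[of "G ** C ** A"] by (simp add: matrix_vector_mul_assoc[symmetric] inner_commute)
  have e4: "w \<bullet> (transpose B *v (P *v x)) = (P *v x) \<bullet> (B *v w)"
    using inner_matrix_vector_mult[of w "transpose B"] by (simp add: inner_commute)
  have e5: "w \<bullet> (transpose (G ** C ** B) *v w) = w \<bullet> (G *v (C *v (B *v w)))"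
    using inner_matrix_vector_mult[of w "transpose (G ** C ** B)"]
    by (simp add: matrix_vector_mul_assoc[symmetric] inner_commute)
  have e6: "(transpose C *v (G *v w)) \<bullet> y = w \<bullet> (G *v (C *v y))" for y
    using inner_matrix_vector_mult[of "G *v w" C y] inner_matrix_vector_mult[of w G] G_sym
    by (simp add: inner_commute)
  have t1: "x \<bullet> ((P ** A + transpose A ** P + eta *\<^sub>R mat 1) *v x)
      = 2 * ((P *v x) \<bullet> (A *v x)) + eta * (x \<bullet> x)"
    by (simp del: transpose_matrix_vector add: matrix_vector_mult_add_rdistrib
        scaleR_matrix_vector_assoc[symmetric] matrix_vector_mul_assoc[symmetric] inner_add e1 e2
        inner_commute)
  have t2: "x \<bullet> ((P ** B - transpose (C + G ** C ** A)) *v (-w))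
      = - ((P *v x) \<bullet> (B *v w)) + (C *v x) \<bullet> w + w \<bullet> (G *v (C *v (A *v x)))"
    by (simp del: transpose_matrix_vector add: matrix_vector_mult_diff_rdistrib
        matrix_vector_mult_add_rdistrib transpose_add matrix_vector_mul_assoc[symmetric]
        inner_add inner_diff e1 e2 e3 inner_commute matrix_vector_mult_uminus)
  have t3: "(-w) \<bullet> ((transpose B ** P - (C + G ** C ** A)) *v x)
      = - ((P *v x) \<bullet> (B *v w)) + (C *v x) \<bullet> w + w \<bullet> (G *v (C *v (A *v x)))"
    by (simp del: transpose_matrix_vector add: matrix_vector_mult_diff_rdistrib
        matrix_vector_mult_add_rdistrib matrix_vector_mul_assoc[symmetric] inner_add inner_diff
        e4 inner_commute)
  have t4: "(-w) \<bullet> ((- (2 *\<^sub>R Z) - G ** C ** B - transpose (G ** C ** B)) *v (-w))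
      = - 2 * (w \<bullet> (Z *v w)) - 2 * (w \<bullet> (G *v (C *v (B *v w))))"
    by (simp del: transpose_matrix_vector add: matrix_vector_mult_diff_rdistrib
        uminus_matrix_vector_mult scaleR_matrix_vector_assoc[symmetric]
        matrix_vector_mul_assoc[symmetric] inner_add inner_diff e5
        matrix_vector_mult_diff_distrib matrix_vector_mult_uminus)
  have lhs: "(P *v x + transpose C *v (G *v w)) \<bullet> (A *v x - B *v w)
      = (P *v x) \<bullet> (A *v x) - (P *v x) \<bullet> (B *v w)
        + w \<bullet> (G *v (C *v (A *v x))) - w \<bullet> (G *v (C *v (B *v w)))"
    by (simp del: transpose_matrix_vector add: inner_add inner_diff e6)
  show ?thesis
    using Q unfolding G_def[symmetric] Z_def[symmetric] t1 t2 t3 t4 lhs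
    by (simp add: inner_commute)
qed

lemma kras_mem_closed_convex:
  assumes "w \<in> kras f y" "\<delta> > 0" "f ` {y - \<delta>..y + \<delta>} \<subseteq> T" "closed T" "convex T"
  shows "w \<in> T"
proof -
  have "w \<in> closure (convex hull (f ` {y - \<delta>..y + \<delta>}))"
    using assms(1,2) unfolding kras_def by blast
  moreover have "closure (convex hull (f ` {y - \<delta>..y + \<delta>})) \<subseteq> T"
    using assms(3-5) by (intro closure_minimal hull_minimal) auto
  ultimately show ?thesis by blast
qed

lemma sector_cond_finite:
  assumes "sector_cond f z" "z \<noteq> \<infinity>"
  shows "0 < real_of_ereal z" "f s * (f s - real_of_ereal z * s) \<le> 0"
  using assms by (cases z; auto simp: sector_cond_def)+

lemma sector_cond_sign:
  assumes "sector_cond f z"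
  shows "0 \<le> f s * s"
proof (cases "z = \<infinity>")
  case True
  then show ?thesis using assms unfolding sector_cond_def by auto
next
  case False
  define r where "r = real_of_ereal z"
  have r: "0 < r" "f s * (f s - r * s) \<le> 0"
    using sector_cond_finite[OF assms False] unfolding r_def by auto
  then have "(f s)\<^sup>2 \<le> r * (f s * s)" by (simp add: power2_eq_square algebra_simps)
  then have "0 \<le> r * (f s * s)" using zero_le_power2[of "f s"] by linarith
  then show ?thesis using r(1) by (simp add: zero_le_mult_iff)
qed

text \<open>Near \<open>y \<noteq> 0\<close> every argument has the sign of \<open>y\<close>, so the values of \<open>f\<close> lie in the closed
  half-line \<open>{t. 0 \<le> y * t}\<close>.\<close>

lemma kras_sign:
  assumes sign: "\<And>s. 0 \<le> f s * s" and w: "w \<in> kras f y"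
  shows "0 \<le> w * y"
proof (cases "y = 0")
  case False
  have "f ` {y - \<bar>y\<bar>/2..y + \<bar>y\<bar>/2} \<subseteq> {t. 0 \<le> y * t}"
  proof clarsimp
    fix s assume s: "y - \<bar>y\<bar>/2 \<le> s" "s \<le> y + \<bar>y\<bar>/2"
    then have sy: "0 < s * y" using False by (cases "y > 0") (auto intro: mult_neg_neg)
    then have "0 < s * s" by (auto simp: zero_less_mult_iff)
    have "0 \<le> (y * f s) * (s * s)"
      using mult_nonneg_nonneg[OF sign[of s] less_imp_le[OF sy]] by (simp add: ac_simps)
    then show "0 \<le> y * f s" using \<open>0 < s * s\<close> by (simp add: zero_le_mult_iff)
  qed
  moreover have "closed {t::real. 0 \<le> y * t}" "convex {t::real. 0 \<le> y * t}"
    using closed_halfspace_ge[of 0 y] convex_halfspace_ge[of 0 y] by simp_all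
  ultimately have "0 \<le> y * w"
    using kras_mem_closed_convex[OF w, of "\<bar>y\<bar>/2"] False by auto
  then show ?thesis by (simp add: mult.commute)
qed simp

lemma kras_sector_bound:
  assumes r: "0 < r" and sector: "\<And>s. f s * (f s - r * s) \<le> 0" and w: "w \<in> kras f y"
  shows "w * (w - r * y) \<le> 0"
proof -
  have f_between: "min 0 (r * s) \<le> f s \<and> f s \<le> max 0 (r * s)" for s
    using sector[of s] by (auto simp: mult_le_0_iff)
  have w_between: "min 0 (r * y) - e \<le> w \<and> w \<le> max 0 (r * y) + e" if "0 < e" for e
  proof -
    let ?T = "{min 0 (r * y) - e..max 0 (r * y) + e}"
    have "f ` {y - e / r..y + e / r} \<subseteq> ?T"
    proof clarsimp
      fix s assume "y - e / r \<le> s" "s \<le> y + e / r"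
      then have "\<bar>s - y\<bar> \<le> e / r" by (simp add: abs_le_iff)
      then have "r * \<bar>s - y\<bar> \<le> e" using r by (metis mult.commute pos_le_divide_eq)
      moreover have "\<bar>r * s - r * y\<bar> = r * \<bar>s - y\<bar>"
        using r by (simp add: abs_mult right_diff_distrib[symmetric])
      ultimately have "\<bar>r * s - r * y\<bar> \<le> e" by simp
      then show "min 0 (r * y) - e \<le> f s \<and> f s \<le> max 0 (r * y) + e"
        using f_between[of s] by (auto simp: min_def max_def split: if_splits)
    qed
    moreover have "0 < e / r" using r that by simp
    ultimately have "w \<in> ?T" using kras_mem_closed_convex[OF w] by blast
    then show ?thesis by simp
  qed
  have "min 0 (r * y) \<le> w" "w \<le> max 0 (r * y)"
    using w_between by (auto intro: field_le_epsilon simp: algebra_simps)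
  then show ?thesis
    by (cases "0 \<le> w") (auto simp: mult_le_0_iff min_def max_def split: if_splits)
qed

lemma kras_sector:
  assumes "sector_cond f z" and w: "w \<in> kras f y"
  shows "ereal_recip z * w\<^sup>2 \<le> w * y"
proof (cases "z = \<infinity>")
  case True
  then show ?thesis
    using kras_sign[OF sector_cond_sign[OF assms(1)] w] by (simp add: ereal_recip_def)
next
  case False
  define r where "r = real_of_ereal z"
  have r: "0 < r" "\<And>s. f s * (f s - r * s) \<le> 0"
    using sector_cond_finite[OF assms(1) False] unfolding r_def by auto
  have "w\<^sup>2 \<le> r * (w * y)"
    using kras_sector_bound[OF r w] by (simp add: power2_eq_square algebra_simps)
  then have "w\<^sup>2 / r \<le> w * y" using r(1) by (simp add: divide_le_eq mult.commute)
  then show ?thesis using False by (simp add: ereal_recip_def r_def)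
qed

lemma piecewise_cont_locally_bounded:
  assumes "piecewise_cont f"
  shows "\<exists>d>0. \<exists>M. \<forall>t. dist t s < d \<longrightarrow> \<bar>f t\<bar> \<le> M"
proof -
  obtain l r where l: "(f \<longlongrightarrow> l) (at_left s)" and r: "(f \<longlongrightarrow> r) (at_right s)"
    using assms unfolding piecewise_cont_def by blast
  define M where "M = max (max (\<bar>l\<bar> + 1) (\<bar>r\<bar> + 1)) \<bar>f s\<bar>"
  have near: "eventually (\<lambda>t. dist (f t) c < 1 \<longrightarrow> \<bar>f t\<bar> \<le> M) F" if "c = l \<or> c = r" for c F
    using that by (intro always_eventually) (auto simp: M_def dist_real_def)
  have "eventually (\<lambda>t. \<bar>f t\<bar> \<le> M) (at s)"
    unfolding eventually_at_split
    using eventually_mp[OF near tendstoD[OF l zero_less_one]]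
      eventually_mp[OF near tendstoD[OF r zero_less_one]] by blast
  then obtain d where "d > 0" "\<And>t. t \<noteq> s \<Longrightarrow> dist t s < d \<Longrightarrow> \<bar>f t\<bar> \<le> M"
    unfolding eventually_at by auto
  moreover have "\<bar>f s\<bar> \<le> M" by (simp add: M_def)
  ultimately show ?thesis by metis
qed

lemma piecewise_cont_bounded:
  assumes "piecewise_cont f"
  shows "\<exists>M. \<forall>t\<in>{a..b}. \<bar>f t\<bar> \<le> M"
proof -
  obtain d M where dM: "\<And>s. d s > 0" "\<And>s t. dist t s < d s \<Longrightarrow> \<bar>f t\<bar> \<le> M s"
    using piecewise_cont_locally_bounded[OF assms] by metis
  have "{a..b} \<subseteq> (\<Union>s\<in>{a..b}. ball s (d s))" using dM(1) by auto
  then obtain D where D: "D \<subseteq> {a..b}" "finite D" "{a..b} \<subseteq> (\<Union>s\<in>D. ball s (d s))"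
    by (rule compactE_image[OF compact_Icc open_ball])
  have "\<bar>f t\<bar> \<le> Max (M ` D)" if t: "t \<in> {a..b}" for t
  proof -
    obtain s where s: "s \<in> D" "t \<in> ball s (d s)" using D t by blast
    then have "\<bar>f t\<bar> \<le> M s" using dM(2) by (simp add: dist_commute)
    also have "M s \<le> Max (M ` D)" using s D by auto
    finally show ?thesis .
  qed
  then show ?thesis by blast
qed

lemma piecewise_cont_absolutely_integrable_on:
  assumes pc: "piecewise_cont f"
  shows "f absolutely_integrable_on {a..b}"
proof -
  obtain M where M: "\<And>t. t \<in> {a..b} \<Longrightarrow> \<bar>f t\<bar> \<le> M"
    using piecewise_cont_bounded[OF pc] by blast
  define D where "D = {s \<in> {a..b}. \<not> isCont f s}"
  define S where "S = {a..b} - D"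
  have D: "finite D" using pc unfolding piecewise_cont_def D_def by blast
  then have "negligible D" by (rule negligible_finite)
  moreover have "{a..b} \<in> sets lebesgue"
    using lmeasurable_cbox[of a b] by (simp add: fmeasurableD)
  ultimately have S: "S \<in> sets lebesgue"
    unfolding S_def by (metis sets.Diff negligible_imp_sets)
  have "continuous_on S f"
    by (rule continuous_at_imp_continuous_on) (auto simp: S_def D_def)
  then have "f \<in> borel_measurable (lebesgue_on S)"
    by (rule continuous_imp_measurable_on_sets_lebesgue[OF _ S])
  moreover have "(\<lambda>_. M) integrable_on S"
    using S by (intro integrable_on_const bounded_set_imp_lmeasurable)
      (auto simp: S_def intro: bounded_subset[of "{a..b}"])
  ultimately have "f absolutely_integrable_on S"
    using M S by (intro measurable_bounded_by_integrable_imp_absolutely_integrable) (auto simp: S_def)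
  moreover have "negligible {x \<in> S - {a..b}. f x \<noteq> 0}" "negligible {x \<in> {a..b} - S. f x \<noteq> 0}"
    using \<open>negligible D\<close> by (auto simp: S_def intro: negligible_subset)
  ultimately show ?thesis using absolutely_integrable_spike_set_eq by blast
qed

lemma int0_eq_integral:
  fixes h :: "real \<Rightarrow> real"
  assumes int: "\<And>a b. h integrable_on {a..b}" and "a \<le> b"
  shows "int0 h b - int0 h a = integral {a..b} h"
proof -
  consider "0 \<le> a" | "a < 0" "0 \<le> b" | "b < 0" by linarith
  then show ?thesis
  proof cases
    case 1
    then have "integral {0..a} h + integral {a..b} h = integral {0..b} h"
      using assms by (intro Henstock_Kurzweil_Integration.integral_combine) auto
    then show ?thesis using 1 assms(2) unfolding int0_def by simp
  next
    case 2
    then have "integral {a..0} h + integral {0..b} h = integral {a..b} h"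
      using assms by (intro Henstock_Kurzweil_Integration.integral_combine) auto
    then show ?thesis using 2 unfolding int0_def by simp
  next
    case 3
    then have "integral {a..b} h + integral {b..0} h = integral {a..0} h"
      using assms by (intro Henstock_Kurzweil_Integration.integral_combine) auto
    then show ?thesis using 3 assms(2) unfolding int0_def by simp
  qed
qed

lemma int0_isCont:
  fixes h :: "real \<Rightarrow> real"
  assumes int: "\<And>a b. h integrable_on {a..b}"
  shows "isCont (int0 h) t"
proof -
  have "continuous_on {t - 1..t + 1} (\<lambda>s. int0 h (t - 1) + integral {t - 1..s} h)"
    by (intro continuous_intros indefinite_integral_continuous_1 int)
  then have "continuous_on {t - 1..t + 1} (int0 h)"
    by (rule continuous_on_eq) (use int0_eq_integral[OF int] in fastforce)
  then show ?thesis
    by (rule continuous_on_interior) (simp add: interior_atLeastAtMost_real)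
qed

lemma int0_mono:
  fixes h :: "real \<Rightarrow> real"
  assumes int: "\<And>a b. h integrable_on {a..b}" and nonneg: "\<And>s. 0 \<le> h s" and "a \<le> b"
  shows "int0 h a \<le> int0 h b"
  using int0_eq_integral[OF int \<open>a \<le> b\<close>] integral_nonneg[OF int[of a b] nonneg] by simp

lemma int0_nonneg:
  fixes h :: "real \<Rightarrow> real"
  assumes int: "\<And>a b. h integrable_on {a..b}" and sign: "\<And>s. 0 \<le> h s * s"
  shows "0 \<le> int0 h t"
proof -
  \<comment> \<open>the sign condition says nothing about \<open>h 0\<close>, so remove that point\<close>
  define g where "g s = (if s = 0 then 0 else h s)" for s
  have g_eq: "integral {a..b} g = integral {a..b} h" for a b
    by (rule integral_spike[of "{0}"]) (auto simp: g_def)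
  have g_int: "g integrable_on {a..b}" for a b
    by (rule integrable_spike[OF int, of "{0}"]) (auto simp: g_def)
  have g_pos: "0 \<le> g s" if "0 \<le> s" for s
    using sign[of s] that by (auto simp: g_def zero_le_mult_iff)
  have g_neg: "g s \<le> 0" if "s \<le> 0" for s
    using sign[of s] that by (auto simp: g_def zero_le_mult_iff)
  show ?thesis
  proof (cases "0 \<le> t")
    case True
    have "0 \<le> integral {0..t} g"
      using g_pos by (intro integral_nonneg[OF g_int]) auto
    then show ?thesis using True g_eq unfolding int0_def by simp
  next
    case False
    have "integral {t..0} g \<le> integral {t..0} (\<lambda>_. 0)"
      using g_neg by (intro integral_le[OF g_int]) auto
    then show ?thesis using False g_eq unfolding int0_def by simp
  qed
qed

lemma abs_int0_le:
  fixes h :: "real \<Rightarrow> real"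
  assumes int: "\<And>a b. h absolutely_integrable_on {a..b}" and "\<bar>t\<bar> \<le> R"
  shows "\<bar>int0 h t\<bar> \<le> int0 (\<lambda>s. \<bar>h s\<bar>) R - int0 (\<lambda>s. \<bar>h s\<bar>) (-R)"
proof -
  let ?H = "int0 (\<lambda>s. \<bar>h s\<bar>)"
  have h_int: "h integrable_on {a..b}" and abs_int: "(\<lambda>s. \<bar>h s\<bar>) integrable_on {a..b}" for a b
    using int[of a b] unfolding absolutely_integrable_on_def by auto
  define a where "a = min 0 t"
  define b where "b = max 0 t"
  have "\<bar>int0 h t\<bar> = \<bar>int0 h b - int0 h a\<bar>"
    by (simp add: a_def b_def min_def max_def int0_def)
  also have "\<dots> = \<bar>integral {a..b} h\<bar>"
    using int0_eq_integral[OF h_int] by (simp add: a_def b_def)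
  also have "\<dots> \<le> integral {a..b} (\<lambda>s. \<bar>h s\<bar>)"
    using Henstock_Kurzweil_Integration.integral_norm_bound_integral[OF h_int abs_int] by simp
  also have "\<dots> = ?H b - ?H a"
    using int0_eq_integral[OF abs_int] by (simp add: a_def b_def)
  also have "\<dots> \<le> ?H R - ?H (-R)"
  proof -
    have "?H b \<le> ?H R" "?H (-R) \<le> ?H a"
      using assms(2) by (auto intro!: int0_mono[OF abs_int] simp: a_def b_def)
    then show ?thesis by linarith
  qed
  finally show ?thesis .
qed

lemma matrix_vector_mult_norm_bound: "\<exists>K>0. \<forall>x. norm ((M::real^'a^'b) *v x) \<le> K * norm x"
  using bounded_linear.pos_bounded[OF matrix_vector_mul_bounded_linear[of M]]
  by (metis mult.commute)

lemma quadratic_form_upper_bound: "\<exists>K>0. \<forall>x. x \<bullet> ((P::real^'n^'n) *v x) \<le> K * (norm x)\<^sup>2"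
proof -
  obtain K where K: "K > 0" "\<And>x. norm (P *v x) \<le> K * norm x"
    using matrix_vector_mult_norm_bound by blast
  have "x \<bullet> (P *v x) \<le> K * (norm x)\<^sup>2" for x
  proof -
    have "x \<bullet> (P *v x) \<le> norm x * norm (P *v x)" by (rule norm_cauchy_schwarz)
    also have "\<dots> \<le> norm x * (K * norm x)" using K by (simp add: mult_left_mono)
    finally show ?thesis by (simp add: power2_eq_square algebra_simps)
  qed
  then show ?thesis using K by blast
qed

lemma pos_def_quadratic_lower_bound:
  assumes "pos_def (P::real^'n^'n)"
  shows "\<exists>m>0. \<forall>x. m * (norm x)\<^sup>2 \<le> x \<bullet> (P *v x)"
proof -
  have pd: "\<And>x. x \<noteq> 0 \<Longrightarrow> x \<bullet> (P *v x) > 0" using assms unfolding pos_def_def by blast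
  obtain i :: 'n where True by blast
  have "axis i 1 \<in> sphere (0::real^'n) 1" using norm_axis_1[of i] by simp
  then have ne: "sphere (0::real^'n) 1 \<noteq> {}" by blast
  have "continuous_on (sphere 0 1) (\<lambda>x::real^'n. x \<bullet> (P *v x))"
    by (intro continuous_intros linear_continuous_on matrix_vector_mul_bounded_linear)
  then obtain u where u: "u \<in> sphere 0 1" "\<And>y. y \<in> sphere 0 1 \<Longrightarrow> u \<bullet> (P *v u) \<le> y \<bullet> (P *v y)"
    using continuous_attains_inf[OF compact_sphere ne] by blast
  define m where "m = u \<bullet> (P *v u)"
  have "u \<noteq> 0" using u(1) by auto
  then have m_pos: "m > 0" unfolding m_def using pd by blast
  have "m * (norm x)\<^sup>2 \<le> x \<bullet> (P *v x)" for x
  proof (cases "x = 0")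
    case False
    define y where "y = (1 / norm x) *\<^sub>R x"
    have y: "y \<in> sphere 0 1" using False unfolding y_def by simp
    have "x = norm x *\<^sub>R y" using False unfolding y_def by simp
    then have "x \<bullet> (P *v x) = (norm x)\<^sup>2 * (y \<bullet> (P *v y))"
      by (metis matrix_vector_mult_scaleR inner_scaleR_left inner_scaleR_right
          mult.assoc power2_eq_square)
    moreover have "m \<le> y \<bullet> (P *v y)" using u(2)[OF y] unfolding m_def .
    ultimately show ?thesis by (metis mult.commute mult_right_mono zero_le_power2)
  qed simp
  then show ?thesis using m_pos by blast
qed

lemma class_KinfI:
  fixes \<alpha> :: "real \<Rightarrow> real"
  assumes "continuous_on {0..} \<alpha>" "\<And>r s. 0 \<le> r \<Longrightarrow> r < s \<Longrightarrow> \<alpha> r < \<alpha> s" "\<alpha> 0 = 0"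
    "filterlim \<alpha> at_top at_top"
  shows "class_Kinf \<alpha>"
proof -
  have "strict_mono_on {0..} \<alpha>" by (rule strict_mono_onI) (use assms(2) in auto)
  moreover have "\<alpha> s \<ge> 0" if "s \<ge> 0" for s
    using assms(2)[of 0 s] assms(3) that by (cases "s = 0") auto
  ultimately show ?thesis using assms unfolding class_Kinf_def by blast
qed

lemma class_Kinf_less:
  assumes "class_Kinf \<alpha>" "0 \<le> r" "r < s"
  shows "\<alpha> r < \<alpha> s"
proof -
  have "strict_mono_on {0..} \<alpha>" using assms(1) by (simp add: class_Kinf_def)
  then show ?thesis using strict_mono_onD[of "{0..}" \<alpha> r s] assms(2,3) by simp
qed

lemma class_Kinf_le:
  assumes "class_Kinf \<alpha>" "0 \<le> r" "r \<le> s"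
  shows "\<alpha> r \<le> \<alpha> s"
  using class_Kinf_less[OF assms(1,2), of s] assms(3) by (cases "r = s") auto

lemma class_Kinf_scaled_square:
  assumes "0 < c"
  shows "class_Kinf (\<lambda>r. c * r\<^sup>2)"
proof (rule class_KinfI)
  show "continuous_on {0..} (\<lambda>r. c * r\<^sup>2)" by (intro continuous_intros)
  show "c * r\<^sup>2 < c * s\<^sup>2" if "0 \<le> r" "r < s" for r s
    using assms that by (simp add: power_strict_mono)
  show "filterlim (\<lambda>r. c * r\<^sup>2) at_top at_top"
    using filterlim_pow_at_top[OF _ filterlim_ident, of 2]
    by (intro filterlim_tendsto_pos_mult_at_top[OF tendsto_const assms]) simp
qed simp

lemma class_Kinf_add:
  assumes \<alpha>: "class_Kinf \<alpha>" and g: "continuous_on {0..} g" "mono_on {0..} g" "g 0 = 0"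
  shows "class_Kinf (\<lambda>r. \<alpha> r + g r)"
proof (rule class_KinfI)
  have \<alpha>_cont: "continuous_on {0..} \<alpha>" and \<alpha>_0: "\<alpha> 0 = 0"
    and \<alpha>_top: "filterlim \<alpha> at_top at_top"
    using \<alpha> unfolding class_Kinf_def by auto
  show "continuous_on {0..} (\<lambda>r. \<alpha> r + g r)" by (rule continuous_on_add[OF \<alpha>_cont g(1)])
  show "\<alpha> r + g r < \<alpha> s + g s" if "0 \<le> r" "r < s" for r s
    using class_Kinf_less[OF \<alpha> that] mono_onD[OF g(2), of r s] that by simp
  show "\<alpha> 0 + g 0 = 0" using \<alpha>_0 g(3) by simp
  have "eventually (\<lambda>r. \<alpha> r \<le> \<alpha> r + g r) at_top"
  proof (rule eventually_mono[OF eventually_ge_at_top[of 0]])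
    show "\<alpha> r \<le> \<alpha> r + g r" if "0 \<le> r" for r :: real
      using mono_onD[OF g(2), of 0 r] g(3) that by simp
  qed
  then show "filterlim (\<lambda>r. \<alpha> r + g r) at_top at_top"
    by (rule filterlim_at_top_mono[OF \<alpha>_top])
qed

lemma class_Kinf_comp:
  assumes \<alpha>: "class_Kinf \<alpha>" and \<beta>: "class_Kinf \<beta>"
  shows "class_Kinf (\<alpha> \<circ> \<beta>)"
proof (rule class_KinfI)
  have \<alpha>_cont: "continuous_on {0..} \<alpha>" and \<beta>_cont: "continuous_on {0..} \<beta>"
    and \<beta>_nonneg: "\<beta> ` {0..} \<subseteq> {0..}"
    and \<alpha>_top: "filterlim \<alpha> at_top at_top" and \<beta>_top: "filterlim \<beta> at_top at_top"
    using \<alpha> \<beta> unfolding class_Kinf_def by auto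
  show "continuous_on {0..} (\<alpha> \<circ> \<beta>)"
    unfolding o_def by (rule continuous_on_compose2[OF \<alpha>_cont \<beta>_cont \<beta>_nonneg])
  show "(\<alpha> \<circ> \<beta>) r < (\<alpha> \<circ> \<beta>) s" if "0 \<le> r" "r < s" for r s
  proof -
    have "0 \<le> \<beta> r" using \<beta>_nonneg that(1) by auto
    then show ?thesis using class_Kinf_less[OF \<alpha> _ class_Kinf_less[OF \<beta> that]] by simp
  qed
  show "(\<alpha> \<circ> \<beta>) 0 = 0" using \<alpha> \<beta> unfolding class_Kinf_def by simp
  show "filterlim (\<alpha> \<circ> \<beta>) at_top at_top"
    unfolding o_def by (rule filterlim_compose[OF \<alpha>_top \<beta>_top])
qed

text \<open>Extending \<open>\<alpha>\<close> by the identity on the negative axis gives a homeomorphism of \<open>\<real>\<close>, whose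
  inverse restricts to the required \<open>\<beta>\<close>.\<close>

lemma class_Kinf_inverse:
  assumes \<alpha>: "class_Kinf \<alpha>"
  obtains \<beta> where "class_Kinf \<beta>" "\<And>r. 0 \<le> r \<Longrightarrow> \<beta> (\<alpha> r) = r"
proof -
  define f where "f r = (if 0 \<le> r then \<alpha> r else r)" for r
  have cont: "continuous_on {0..} \<alpha>" and \<alpha>_0: "\<alpha> 0 = 0" and top: "filterlim \<alpha> at_top at_top"
    and \<alpha>_nonneg: "\<And>s. 0 \<le> s \<Longrightarrow> 0 \<le> \<alpha> s"
    using \<alpha> unfolding class_Kinf_def by auto
  have "continuous_on {0..} f" by (rule continuous_on_eq[OF cont]) (simp add: f_def)
  moreover have "continuous_on {..0} f"
    by (rule continuous_on_eq[OF continuous_on_id]) (auto simp: f_def \<alpha>_0)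
  ultimately have "continuous_on ({0..} \<union> {..0}) f" by (intro continuous_on_closed_Un) auto
  moreover have "{0..} \<union> {..0} = (UNIV :: real set)" by auto
  ultimately have f_cont: "isCont f x" for x
    using continuous_on_eq_continuous_at[OF open_UNIV, of f] by simp
  have f_strict: "strict_mono f"
  proof (rule strict_monoI)
    fix r s :: real assume "r < s"
    then show "f r < f s"
      using class_Kinf_less[OF \<alpha> _ \<open>r < s\<close>] \<alpha>_nonneg[of s] by (auto simp: f_def)
  qed
  have "\<exists>x. f x = y" for y
  proof (cases "0 \<le> y")
    case True
    have "eventually (\<lambda>r. y \<le> \<alpha> r) at_top" using top by (simp add: filterlim_at_top)
    then obtain N where N: "\<And>r. N \<le> r \<Longrightarrow> y \<le> \<alpha> r" by (auto simp: eventually_at_top_linorder)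
    define R where "R = max N 0"
    have "continuous_on {0..R} \<alpha>" by (rule continuous_on_subset[OF cont]) auto
    then obtain x where "0 \<le> x" "\<alpha> x = y"
      using IVT'[of \<alpha> 0 y R] N[of R] True \<alpha>_0 by (auto simp: R_def)
    then show ?thesis unfolding f_def by auto
  qed (auto simp: f_def)
  then have "surj f" by (metis surjI)
  then have f_inv: "f (inv f y) = y" for y by (rule surj_f_inv_f)
  have inv_f: "inv f (f x) = x" for x
    using strict_mono_imp_inj_on[OF f_strict] by simp
  have inv_strict: "strict_mono (inv f)"
  proof (rule strict_monoI)
    fix a b :: real assume "a < b"
    then show "inv f a < inv f b"
      using f_inv[of a] f_inv[of b] f_strict by (metis not_less strict_mono_less_eq)
  qed
  show ?thesis
  proof
    show "inv f (\<alpha> r) = r" if "0 \<le> r" for r using inv_f[of r] that by (simp add: f_def)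
    show "class_Kinf (inv f)"
    proof (rule class_KinfI)
      have "isCont (inv f) (f x)" for x
        by (rule isCont_inverse_function[OF zero_less_one]) (simp_all add: inv_f f_cont)
      then have "isCont (inv f) y" for y using f_inv[of y] by metis
      then show "continuous_on {0..} (inv f)" by (simp add: continuous_at_imp_continuous_on)
      show "inv f r < inv f s" if "r < s" for r s using inv_strict that by (simp add: strict_mono_less)
      show "inv f 0 = 0" using inv_f[of 0] \<alpha>_0 by (simp add: f_def)
      show "filterlim (inv f) at_top at_top"
        unfolding filterlim_at_top
      proof
        fix Z :: real
        show "eventually (\<lambda>s. Z \<le> inv f s) at_top"
        proof (rule eventually_mono[OF eventually_ge_at_top[of "f Z"]])
          show "Z \<le> inv f s" if "f Z \<le> s" for s
            using that inv_strict inv_f[of Z] by (metis strict_mono_less_eq)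
        qed
      qed
    qed
  qed
qed

lemma lure_V_lower_bound:
  assumes pc: "\<And>i. piecewise_cont (psi i)" and sign: "\<And>i s. 0 \<le> psi i s * s"
    and gamma: "\<And>i. 0 \<le> gamma i"
  shows "(1/2) * (x \<bullet> (P *v x)) \<le> lure_V P C gamma psi x"
proof -
  have "psi i integrable_on {a..b}" for i a b
    using piecewise_cont_absolutely_integrable_on[OF pc] unfolding absolutely_integrable_on_def
    by blast
  then have "0 \<le> int0 (psi i) t" for i t by (rule int0_nonneg) (rule sign)
  then have "0 \<le> (\<Sum>i\<in>UNIV. gamma i * int0 (psi i) ((C *v x) $ i))"
    using gamma by (simp add: sum_nonneg)
  then show ?thesis unfolding lure_V_def by simp
qed

lemma lure_V_upper_bound:
  assumes pc: "\<And>i. piecewise_cont (psi i)" and gamma: "\<And>i. 0 \<le> gamma i"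
  obtains \<alpha> where "class_Kinf \<alpha>" "\<And>x. lure_V P C gamma psi x \<le> \<alpha> (norm x)"
proof -
  obtain K where K: "K > 0" "\<And>x. x \<bullet> (P *v x) \<le> K * (norm x)\<^sup>2"
    using quadratic_form_upper_bound by blast
  obtain c where c: "c > 0" "\<And>x. norm (C *v x) \<le> c * norm x"
    using matrix_vector_mult_norm_bound by blast
  define H where "H i = int0 (\<lambda>s. \<bar>psi i s\<bar>)" for i
  define G where "G r = (\<Sum>i\<in>UNIV. gamma i * (H i (c * r) - H i (- (c * r))))" for r
  have abs_int: "(\<lambda>s. \<bar>psi i s\<bar>) integrable_on {a..b}" for i a b
    using piecewise_cont_absolutely_integrable_on[OF pc] unfolding absolutely_integrable_on_def
    by auto
  have H_cont: "isCont (H i) t" for i t unfolding H_def by (rule int0_isCont[OF abs_int])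
  have H_mono: "H i a \<le> H i b" if "a \<le> b" for i a b
    unfolding H_def by (rule int0_mono[OF abs_int _ that]) simp
  have "isCont G r" for r
    unfolding G_def by (intro continuous_intros isCont_o2[OF _ H_cont])
  then have "continuous_on {0..} G" by (simp add: continuous_at_imp_continuous_on)
  moreover have "mono_on {0..} G"
  proof (rule mono_onI)
    fix r s :: real assume "r \<in> {0..}" "s \<in> {0..}" "r \<le> s"
    then have "c * r \<le> c * s" using c(1) by (simp add: mult_left_mono)
    then show "G r \<le> G s"
      unfolding G_def using H_mono gamma
      by (intro sum_mono mult_left_mono) (auto intro: diff_mono)
  qed
  moreover have "G 0 = 0" by (simp add: G_def)
  ultimately have Kinf: "class_Kinf (\<lambda>r. K/2 * r\<^sup>2 + G r)"
    using K(1) by (intro class_Kinf_add class_Kinf_scaled_square) auto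
  have "lure_V P C gamma psi x \<le> K/2 * (norm x)\<^sup>2 + G (norm x)" for x
  proof -
    have "gamma i * int0 (psi i) ((C *v x) $ i)
        \<le> gamma i * (H i (c * norm x) - H i (- (c * norm x)))" for i
    proof -
      have "\<bar>(C *v x) $ i\<bar> \<le> c * norm x"
        using component_le_norm_cart[of "C *v x" i] c(2)[of x] by linarith
      then have "\<bar>int0 (psi i) ((C *v x) $ i)\<bar> \<le> H i (c * norm x) - H i (- (c * norm x))"
        unfolding H_def by (rule abs_int0_le[OF piecewise_cont_absolutely_integrable_on[OF pc]])
      then show ?thesis using gamma[of i] by (simp add: mult_left_mono abs_le_iff)
    qed
    then have "(\<Sum>i\<in>UNIV. gamma i * int0 (psi i) ((C *v x) $ i)) \<le> G (norm x)"
      unfolding G_def by (rule sum_mono)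
    then show ?thesis using K(2)[of x] unfolding lure_V_def by simp
  qed
  with Kinf show ?thesis by (rule that)
qed

lemma lure_lie_set_le:
  fixes A :: "real^'n^'n" and B :: "real^'p^'n" and C :: "real^'n^'p"
  assumes sector: "\<And>i. sector_cond (psi i) (zeta $ i)" and P_sym: "transpose P = P"
    and LMI: "neg_semidef (lmi_M A B C zeta gamma P eta)"
    and a: "a \<in> lie_set (gen_grad P C gamma psi x) (F_kras A B C psi x)"
  shows "a \<le> - eta/2 * (norm x)\<^sup>2"
proof -
  obtain f where f: "f \<in> F_kras A B C psi x" "\<And>v. v \<in> gen_grad P C gamma psi x \<Longrightarrow> v \<bullet> f = a"
    using a unfolding lie_set_def by blast
  obtain w where w: "f = A *v x - B *v w" "w \<in> Kras psi (C *v x)"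
    using f(1) unfolding F_kras_def by blast
  have "P *v x + transpose C *v (diagm gamma *v w) \<in> gen_grad P C gamma psi x"
    using w(2) unfolding gen_grad_def by blast
  then have a_eq: "a = (P *v x + transpose C *v (diagm gamma *v w)) \<bullet> (A *v x - B *v w)"
    using f(2) w(1) by metis
  have "w \<bullet> (diagm (\<lambda>i. ereal_recip (zeta $ i)) *v w)
      = (\<Sum>i\<in>UNIV. ereal_recip (zeta $ i) * (w $ i)\<^sup>2)"
    unfolding inner_vec_def diagm_mv_nth by (simp add: power2_eq_square algebra_simps)
  also have "\<dots> \<le> (\<Sum>i\<in>UNIV. w $ i * (C *v x) $ i)"
    using w(2) unfolding Kras_def by (intro sum_mono kras_sector[OF sector]) blast
  also have "\<dots> = (C *v x) \<bullet> w" unfolding inner_vec_def by (simp add: mult.commute)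
  finally have "w \<bullet> (diagm (\<lambda>i. ereal_recip (zeta $ i)) *v w) \<le> (C *v x) \<bullet> w" .
  then show ?thesis
    using a_eq lmi_inner_bound[OF LMI P_sym, of x w] by (simp add: power2_norm_eq_inner)
qed

theorem proposition1:
  fixes A :: "real^'n^'n" and B :: "real^'p^'n" and C :: "real^'n^'p"
    and psi :: "'p \<Rightarrow> real \<Rightarrow> real" and zeta :: "ereal^'p"
    and gamma :: "'p \<Rightarrow> real" and P :: "real^'n^'n" and eta :: real
  assumes A1: "\<forall>i. piecewise_cont (psi i) \<and> sector_cond (psi i) (zeta $ i)"
    and gamma_pos: "\<forall>i. gamma i > 0"
    and P_pos: "pos_def P"
    and eta_pos: "eta > 0"
    and LMI: "neg_semidef (lmi_M A B C zeta gamma P eta)"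
  shows "\<exists>\<alpha>1 \<alpha>2 \<alpha>3. class_Kinf \<alpha>1 \<and> class_Kinf \<alpha>2 \<and> class_Kinf \<alpha>3 \<and>
    (\<forall>x. \<alpha>1 (norm x) \<le> lure_V P C gamma psi x \<and> lure_V P C gamma psi x \<le> \<alpha>2 (norm x)) \<and>
    (\<forall>x. Sup (ereal ` lie_set (gen_grad P C gamma psi x) (F_kras A B C psi x))
           \<le> - ereal (\<alpha>3 (lure_V P C gamma psi x)))"
proof -
  let ?V = "lure_V P C gamma psi"
  have pc: "\<And>i. piecewise_cont (psi i)" and sector: "\<And>i. sector_cond (psi i) (zeta $ i)"
    using A1 by auto
  have gamma: "\<And>i. 0 \<le> gamma i" using gamma_pos by (simp add: le_less)
  have P_sym: "transpose P = P" using P_pos unfolding pos_def_def by blast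
  obtain m where m: "m > 0" "\<And>x. m * (norm x)\<^sup>2 \<le> x \<bullet> (P *v x)"
    using pos_def_quadratic_lower_bound[OF P_pos] by blast
  obtain \<alpha>2 where \<alpha>2: "class_Kinf \<alpha>2" "\<And>x. ?V x \<le> \<alpha>2 (norm x)"
    using lure_V_upper_bound[where psi = psi and gamma = gamma and P = P and C = C] pc gamma
    by blast
  obtain \<beta> where \<beta>: "class_Kinf \<beta>" "\<And>r. 0 \<le> r \<Longrightarrow> \<beta> (\<alpha>2 r) = r"
    using class_Kinf_inverse[OF \<alpha>2(1)] by blast
  define \<alpha>3 where "\<alpha>3 = (\<lambda>r. eta/2 * r\<^sup>2) \<circ> \<beta>"
  have V_quadratic: "1/2 * (x \<bullet> (P *v x)) \<le> ?V x" for x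
    by (intro lure_V_lower_bound pc sector_cond_sign[OF sector] gamma)
  have lower: "m/2 * (norm x)\<^sup>2 \<le> ?V x" for x
    using m(2)[of x] V_quadratic[of x] by simp
  have decay: "\<alpha>3 (?V x) \<le> eta/2 * (norm x)\<^sup>2" for x
  proof -
    have "0 \<le> m/2 * (norm x)\<^sup>2" using m(1) by simp
    then have V_nonneg: "0 \<le> ?V x" using lower[of x] by linarith
    have "0 = \<beta> 0" using \<beta>(1) unfolding class_Kinf_def by argo
    also have "\<dots> \<le> \<beta> (?V x)" by (rule class_Kinf_le[OF \<beta>(1) order_refl V_nonneg])
    finally have "0 \<le> \<beta> (?V x)" .
    moreover have "\<beta> (?V x) \<le> norm x"
      using class_Kinf_le[OF \<beta>(1) V_nonneg \<alpha>2(2)] \<beta>(2)[OF norm_ge_zero, of x] by simp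
    ultimately have "(\<beta> (?V x))\<^sup>2 \<le> (norm x)\<^sup>2" by (rule power_mono[rotated])
    then show ?thesis using eta_pos by (simp add: \<alpha>3_def)
  qed
  have "Sup (ereal ` lie_set (gen_grad P C gamma psi x) (F_kras A B C psi x))
      \<le> - ereal (\<alpha>3 (?V x))" for x
  proof (rule Sup_least)
    fix e assume "e \<in> ereal ` lie_set (gen_grad P C gamma psi x) (F_kras A B C psi x)"
    then obtain a where a: "a \<in> lie_set (gen_grad P C gamma psi x) (F_kras A B C psi x)" "e = ereal a"
      by blast
    have "a \<le> - \<alpha>3 (?V x)" using lure_lie_set_le[OF sector P_sym LMI a(1)] decay[of x] by linarith
    then show "e \<le> - ereal (\<alpha>3 (?V x))" using a(2) by simp
  qed
  moreover have "class_Kinf \<alpha>3"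
    unfolding \<alpha>3_def using eta_pos by (intro class_Kinf_comp class_Kinf_scaled_square \<beta>(1)) simp
  ultimately show ?thesis
    using class_Kinf_scaled_square[of "m/2"] m(1) lower \<alpha>2
    by (intro exI[of _ "\<lambda>r. m/2 * r\<^sup>2"] exI[of _ \<alpha>2] exI[of _ \<alpha>3]) auto
qed

end
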